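(* For every topological space $X$, the games $G_1(\mathcal{C}_\mathcal{O},\mathcal{C}_\mathcal{O})$ and $G_1(\mathcal{C}_X, \neg \mathcal{C}_\mathcal{O})$ are dual; that is: (i) Alice has a winning strategy in $G_1(\mathcal{C}_\mathcal{O},\mathcal{C}_\mathcal{O})$ iff Bob has a winning strategy in $G_1(\mathcal{C}_X, \neg \mathcal{C}_\mathcal{O})$, and Alice has a winning strategy in $G_1(\mathcal{C}_X, \neg \mathcal{C}_\mathcal{O})$ iff Bob has a winning strategy in $G_1(\mathcal{C}_\mathcal{O},\mathcal{C}_\mathcal{O})$; (ii) Alice has a winning predetermined strategy in $G_1(\mathcal{C}_\mathcal{O},\mathcal{C}_\mathcal{O})$ iff Bob has a winning Markov strategy in $G_1(\mathcal{C}_X, \neg \mathcal{C}_\mathcal{O})$, and Alice has a winning predetermined strategy in $G_1(\mathcal{C}_X, \neg \mathcal{C}_\mathcal{O})$ iff Bob has a winning Markov strategy in $G_1(\mathcal{C}_\mathcal{O},\mathcal{C}_\mathcal{O})$.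
   Context: $\mathcal{C}_\mathcal{O}$ is the collection of all covers of $X$ by clopen sets. For $x\in X$, $\mathcal{C}_{\mathcal{T}_{X,x}}$ is the set of nonempty clopen subsets of $X$ containing $x$, and $\mathcal{C}_X=\{\mathcal{C}_{\mathcal{T}_{X,x}}:x\in X\}$. For families $\mathcal{A},\mathcal{B}$, the game $G_1(\mathcal{A},\mathcal{B})$: in each inning $n\in\omega$ Alice chooses $A_n\in\mathcal{A}$ and Bob chooses $B_n\in A_n$; Bob wins if $\{B_n:n\in\omega\}\in\mathcal{B}$, Alice otherwise. $G_1(\mathcal{A},\neg\mathcal{B})$ denotes $G_1(\mathcal{A},\mathcal{P}(\bigcup\mathcal{A})\setminus\mathcal{B})$. A strategy for Alice is a function $\sigma$ from finite sequences of elements of $\bigcup\mathcal{A}$ to $\mathcal{A}$; it is winning if whenever $x_n\in\sigma(\langle x_i:i<n\rangle)$ for all $n$, $\{x_n:n\in\omega\}\notin\mathcal{B}$. A strategy for Bob is a function $\tau$ from finite sequences $\langle A_0,\dots,A_n\rangle$ of elements of $\mathcal{A}$ to $\bigcup\mathcal{A}$ with $\tau(A_0,\dots,A_n)\in A_n$; it is winning if for all such sequences $\{\tau(A_0,\dots,A_n):n\in\omega\}\in\mathcal{B}$. A predetermined strategy for Alice is a function $\sigma:\omega\to\mathcal{A}$ (her move at inning $n$ is $\sigma(n)$). A Markov strategy for Bob is a function $\tau:\mathcal{A}\times\omega\to\bigcup\mathcal{A}$ with $\tau(A,n)\in A$ (his move at inning $n$ is $\tau(A_n,n)$). *)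

theory Defs
  imports "HOL-Analysis.Analysis"
begin

text \<open>Moves of Alice are elements of A; Bob picks an element of Alice's move.
  Finite sequences are lists (oldest first).\<close>

definition neg_game :: "'b set set \<Rightarrow> 'b set set \<Rightarrow> 'b set set" where
  "neg_game \<A> \<B> = Pow (\<Union>\<A>) - \<B>"

definition alice_strategy :: "'b set set \<Rightarrow> ('b list \<Rightarrow> 'b set) \<Rightarrow> bool" where
  "alice_strategy \<A> \<sigma> \<longleftrightarrow> (\<forall>s. set s \<subseteq> \<Union>\<A> \<longrightarrow> \<sigma> s \<in> \<A>)"

definition alice_wins_with :: "'b set set \<Rightarrow> 'b set set \<Rightarrow> ('b list \<Rightarrow> 'b set) \<Rightarrow> bool" where
  "alice_wins_with \<A> \<B> \<sigma> \<longleftrightarrow> alice_strategy \<A> \<sigma> \<and>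
     (\<forall>x :: nat \<Rightarrow> 'b. (\<forall>n. x n \<in> \<sigma> (map x [0..<n])) \<longrightarrow> range x \<notin> \<B>)"

definition alice_has_winning :: "'b set set \<Rightarrow> 'b set set \<Rightarrow> bool" where
  "alice_has_winning \<A> \<B> \<longleftrightarrow> (\<exists>\<sigma>. alice_wins_with \<A> \<B> \<sigma>)"

definition bob_strategy :: "'b set set \<Rightarrow> ('b set list \<Rightarrow> 'b) \<Rightarrow> bool" where
  "bob_strategy \<A> \<tau> \<longleftrightarrow> (\<forall>As. As \<noteq> [] \<and> set As \<subseteq> \<A> \<longrightarrow> \<tau> As \<in> last As)"

definition bob_wins_with :: "'b set set \<Rightarrow> 'b set set \<Rightarrow> ('b set list \<Rightarrow> 'b) \<Rightarrow> bool" where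
  "bob_wins_with \<A> \<B> \<tau> \<longleftrightarrow> bob_strategy \<A> \<tau> \<and>
     (\<forall>A :: nat \<Rightarrow> 'b set. (\<forall>n. A n \<in> \<A>) \<longrightarrow> range (\<lambda>n. \<tau> (map A [0..<Suc n])) \<in> \<B>)"

definition bob_has_winning :: "'b set set \<Rightarrow> 'b set set \<Rightarrow> bool" where
  "bob_has_winning \<A> \<B> \<longleftrightarrow> (\<exists>\<tau>. bob_wins_with \<A> \<B> \<tau>)"

definition alice_has_winning_predetermined :: "'b set set \<Rightarrow> 'b set set \<Rightarrow> bool" where
  "alice_has_winning_predetermined \<A> \<B> \<longleftrightarrow>
     (\<exists>\<sigma> :: nat \<Rightarrow> 'b set. (\<forall>n. \<sigma> n \<in> \<A>) \<and>
        (\<forall>x :: nat \<Rightarrow> 'b. (\<forall>n. x n \<in> \<sigma> n) \<longrightarrow> range x \<notin> \<B>))"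

definition bob_has_winning_markov :: "'b set set \<Rightarrow> 'b set set \<Rightarrow> bool" where
  "bob_has_winning_markov \<A> \<B> \<longleftrightarrow>
     (\<exists>\<tau> :: 'b set \<Rightarrow> nat \<Rightarrow> 'b. (\<forall>A n. A \<in> \<A> \<longrightarrow> \<tau> A n \<in> A) \<and>
        (\<forall>A :: nat \<Rightarrow> 'b set. (\<forall>n. A n \<in> \<A>) \<longrightarrow> range (\<lambda>n. \<tau> (A n) n) \<in> \<B>))"

definition clopen_in :: "'a topology \<Rightarrow> 'a set \<Rightarrow> bool" where
  "clopen_in X U \<longleftrightarrow> openin X U \<and> closedin X U"

definition clopen_covers :: "'a topology \<Rightarrow> 'a set set set" where
  "clopen_covers X = {\<U>. (\<forall>U\<in>\<U>. clopen_in X U) \<and> \<Union>\<U> = topspace X}"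

definition clopen_nbhds :: "'a topology \<Rightarrow> 'a \<Rightarrow> 'a set set" where
  "clopen_nbhds X x = {U. clopen_in X U \<and> U \<noteq> {} \<and> x \<in> U}"

definition clopen_nbhd_systems :: "'a topology \<Rightarrow> 'a set set set" where
  "clopen_nbhd_systems X = {clopen_nbhds X x | x. x \<in> topspace X}"

end

theory Submission
  imports Defs
begin

text \<open>Following Clontz, call \<open>\<R>\<close> a reflection of \<open>\<A>\<close> if the range of every choice function
  on \<open>\<R>\<close> lies in \<open>\<A>\<close> and every member of \<open>\<A>\<close> meets every member of \<open>\<R>\<close>; the clopen
  neighbourhood systems form a reflection of the clopen covers. Each play of \<open>G\<^sub>1(\<A>,\<B>)\<close> is then
  mirrored by a play of \<open>G\<^sub>1(\<R>,\<not>\<B>)\<close> selecting the same points with the roles swapped. Alice's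
  move \<open>A\<close> becomes Bob's choice from \<open>R \<inter> A\<close>. Bob's answers to all possible \<open>R \<in> \<R>\<close> form
  a selection of \<open>\<R>\<close>, hence a move of Alice in \<open>\<A>\<close>. Bob's answers to all \<open>A \<in> \<A>\<close> contain
  some \<open>R \<in> \<R>\<close>, which Alice plays: otherwise a point of each \<open>R\<close> outside of them would form a
  move in \<open>\<A>\<close> that Bob cannot answer.\<close>

definition selections_contain :: "'b set set \<Rightarrow> 'b set set \<Rightarrow> bool" where
  "selections_contain \<C> \<D> \<longleftrightarrow> (\<forall>g. (\<forall>D\<in>\<D>. g D \<in> D) \<longrightarrow> (\<exists>C\<in>\<C>. C \<subseteq> g ` \<D>))"

lemma selections_containD:
  assumes "selections_contain \<C> \<D>" and "\<And>D. D \<in> \<D> \<Longrightarrow> g D \<in> D"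
  shows "\<exists>C\<in>\<C>. C \<subseteq> g ` \<D>"
  using assms by (auto simp: selections_contain_def)

definition reflection :: "'b set set \<Rightarrow> 'b set set \<Rightarrow> bool" where
  "reflection \<R> \<A> \<longleftrightarrow> (\<forall>f. (\<forall>R\<in>\<R>. f R \<in> R) \<longrightarrow> f ` \<R> \<in> \<A>) \<and> (\<forall>A\<in>\<A>. \<forall>R\<in>\<R>. A \<inter> R \<noteq> {})"

text \<open>The responses of \<open>f\<close> (a function of the history of responses and the opponent's new
  move) to a list of opponent moves; this recovers the history a strategy of the dual game
  needs from the opponent's moves alone.\<close>

definition replay :: "('s list \<Rightarrow> 'm \<Rightarrow> 's) \<Rightarrow> 'm list \<Rightarrow> 's list" where
  "replay f = foldl (\<lambda>h m. h @ [f h m]) []"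

lemma replay_Nil [simp]: "replay f [] = []"
  by (simp add: replay_def)

lemma replay_snoc [simp]: "replay f (ms @ [m]) = replay f ms @ [f (replay f ms) m]"
  by (simp add: replay_def)

lemma replay_upt: "replay f (map x [0..<n]) = map (\<lambda>i. f (replay f (map x [0..<i])) (x i)) [0..<n]"
  by (induction n) auto

lemma set_replay_subset:
  assumes "\<And>h m. set h \<subseteq> S \<Longrightarrow> m \<in> M \<Longrightarrow> f h m \<in> S" and "set ms \<subseteq> M"
  shows "set (replay f ms) \<subseteq> S"
  using assms(2) by (induction ms rule: rev_induct) (auto intro: assms(1))

lemma bob_has_winning_if_alice_has_winning:
  assumes "alice_has_winning \<A> \<B>"
    and meets: "\<And>A C. A \<in> \<A> \<Longrightarrow> C \<in> \<C> \<Longrightarrow> A \<inter> C \<noteq> {}"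
    and transfer: "\<And>S. S \<subseteq> \<Union>\<A> \<Longrightarrow> S \<subseteq> \<Union>\<C> \<Longrightarrow> S \<notin> \<B> \<Longrightarrow> S \<in> \<B>'"
  shows "bob_has_winning \<C> \<B>'"
proof -
  obtain \<sigma> where \<sigma>: "alice_wins_with \<A> \<B> \<sigma>"
    using assms(1) by (auto simp: alice_has_winning_def)
  have \<sigma>_move: "\<sigma> h \<in> \<A>" if "set h \<subseteq> \<Union>\<A>" for h
    using \<sigma> that by (auto simp: alice_wins_with_def alice_strategy_def)
  define f where "f h C = (SOME v. v \<in> \<sigma> h \<inter> C)" for h C
  have f: "f h C \<in> \<sigma> h \<inter> C" if "set h \<subseteq> \<Union>\<A>" "C \<in> \<C>" for h C
    unfolding f_def using meets[OF \<sigma>_move[OF that(1)] that(2)] by (rule some_in_eq[THEN iffD2])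
  have replay_f: "set (replay f Cs) \<subseteq> \<Union>\<A>" if "set Cs \<subseteq> \<C>" for Cs
    using f \<sigma>_move that by (intro set_replay_subset[where M = \<C>]) blast+
  define \<tau> where "\<tau> Cs = f (replay f (butlast Cs)) (last Cs)" for Cs
  have "bob_strategy \<C> \<tau>"
    unfolding bob_strategy_def \<tau>_def
    using f replay_f by (meson IntD2 in_set_butlastD last_in_set subset_iff)
  moreover have "range (\<lambda>n. \<tau> (map C [0..<Suc n])) \<in> \<B>'" if C: "\<forall>n. C n \<in> \<C>" for C
  proof -
    define V where "V n = \<tau> (map C [0..<Suc n])" for n
    have history: "replay f (map C [0..<n]) = map V [0..<n]" for n
      by (subst replay_upt) (simp add: V_def \<tau>_def)
    have V_eq: "V n = f (map V [0..<n]) (C n)" for n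
      using history[of n] by (simp add: V_def \<tau>_def)
    have V_history: "set (map V [0..<n]) \<subseteq> \<Union>\<A>" for n
      using replay_f[of "map C [0..<n]"] C unfolding history by (simp add: image_subset_iff)
    have V: "V n \<in> \<sigma> (map V [0..<n]) \<inter> C n" for n
      unfolding V_eq[of n] using f V_history C by blast
    then have "range V \<notin> \<B>"
      using \<sigma> by (auto simp: alice_wins_with_def)
    moreover have "range V \<subseteq> \<Union>\<A>" "range V \<subseteq> \<Union>\<C>"
      using V \<sigma>_move[OF V_history] C by blast+
    ultimately show ?thesis using transfer by (simp add: V_def)
  qed
  ultimately show ?thesis by (auto simp: bob_has_winning_def bob_wins_with_def)
qed

lemma alice_has_winning_if_bob_has_winning:
  assumes "bob_has_winning \<D> \<B>"
    and selections: "selections_contain \<C> \<D>"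
    and disjoint: "\<And>S. S \<in> \<B> \<Longrightarrow> S \<notin> \<B>'"
  shows "alice_has_winning \<C> \<B>'"
proof -
  obtain \<tau> where \<tau>: "bob_wins_with \<D> \<B> \<tau>"
    using assms(1) by (auto simp: bob_has_winning_def)
  have \<tau>_valid: "\<tau> As \<in> last As" if "As \<noteq> []" "set As \<subseteq> \<D>" for As
    using \<tau> that by (simp add: bob_wins_with_def bob_strategy_def)
  have \<tau>_move: "\<tau> (h @ [D]) \<in> D" if "set h \<subseteq> \<D>" "D \<in> \<D>" for h D
    using \<tau>_valid[of "h @ [D]"] that by simp
  \<comment> \<open>a selection of \<open>\<D>\<close> for every \<open>h\<close>; only its values on genuine histories matter\<close>
  define g where "g h D = (if set h \<subseteq> \<D> then \<tau> (h @ [D]) else \<tau> [D])" for h D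
  have g: "g h D \<in> D" if "D \<in> \<D>" for h D
    using that \<tau>_move[of h] \<tau>_move[of "[]"] by (simp add: g_def)
  define f where "f h x = (SOME D. D \<in> \<D> \<and> g h D = x)" for h x
  define \<sigma> where "\<sigma> s = (SOME C. C \<in> \<C> \<and> C \<subseteq> g (replay f s) ` \<D>)" for s
  have \<sigma>: "\<sigma> s \<in> \<C> \<and> \<sigma> s \<subseteq> g (replay f s) ` \<D>" for s
  proof -
    have "\<exists>C. C \<in> \<C> \<and> C \<subseteq> g (replay f s) ` \<D>"
      using selections_containD[OF selections g[where h = "replay f s"]] by blast
    then show ?thesis
      unfolding \<sigma>_def by (rule someI_ex)
  qed
  have "alice_strategy \<C> \<sigma>"
    using \<sigma> by (simp add: alice_strategy_def)
  moreover have "range x \<notin> \<B>'" if x: "\<forall>n. x n \<in> \<sigma> (map x [0..<n])" for x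
  proof -
    define D where "D n = f (replay f (map x [0..<n])) (x n)" for n
    have history: "replay f (map x [0..<n]) = map D [0..<n]" for n
      by (subst replay_upt) (simp add: D_def)
    have D_eq: "D n = f (map D [0..<n]) (x n)" for n
      by (subst D_def) (simp only: history)
    have "\<exists>D'. D' \<in> \<D> \<and> g (map D [0..<n]) D' = x n" for n
    proof -
      have "x n \<in> \<sigma> (map x [0..<n])"
        using x by blast
      also have "\<dots> \<subseteq> g (map D [0..<n]) ` \<D>"
        using \<sigma>[of "map x [0..<n]"] by (simp only: history)
      finally obtain D' where "x n = g (map D [0..<n]) D'" "D' \<in> \<D>"
        by (rule imageE)
      then show ?thesis
        by (intro exI[of _ D']) simp
    qed
    then have D: "D n \<in> \<D> \<and> g (map D [0..<n]) (D n) = x n" for n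
      unfolding D_eq[of n] f_def by (rule someI_ex)
    have "\<tau> (map D [0..<Suc n]) = x n" for n
    proof -
      have "set (map D [0..<n]) \<subseteq> \<D>"
        using D by auto
      then show ?thesis
        using D[of n] by (simp add: g_def)
    qed
    moreover have "range (\<lambda>n. \<tau> (map D [0..<Suc n])) \<in> \<B>"
      using \<tau> D by (simp add: bob_wins_with_def)
    ultimately show ?thesis using disjoint by simp
  qed
  ultimately show ?thesis by (auto simp: alice_has_winning_def alice_wins_with_def)
qed

lemma bob_has_winning_markov_if_alice_has_winning_predetermined:
  fixes \<A> :: "'b set set"
  assumes "alice_has_winning_predetermined \<A> \<B>"
    and meets: "\<And>A C. A \<in> \<A> \<Longrightarrow> C \<in> \<C> \<Longrightarrow> A \<inter> C \<noteq> {}"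
    and transfer: "\<And>S. S \<subseteq> \<Union>\<A> \<Longrightarrow> S \<subseteq> \<Union>\<C> \<Longrightarrow> S \<notin> \<B> \<Longrightarrow> S \<in> \<B>'"
  shows "bob_has_winning_markov \<C> \<B>'"
proof -
  obtain \<sigma> :: "nat \<Rightarrow> 'b set" where \<sigma>: "\<And>n. \<sigma> n \<in> \<A>" and \<sigma>_wins: "\<forall>x. (\<forall>n. x n \<in> \<sigma> n) \<longrightarrow> range x \<notin> \<B>"
    using assms(1) by (auto simp: alice_has_winning_predetermined_def)
  define \<tau> where "\<tau> C n = (SOME v. v \<in> \<sigma> n \<inter> C)" for C n
  have \<tau>: "\<tau> C n \<in> \<sigma> n \<inter> C" if "C \<in> \<C>" for C n
    unfolding \<tau>_def using meets[OF \<sigma> that] by (rule some_in_eq[THEN iffD2])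
  have "range (\<lambda>n. \<tau> (C n) n) \<in> \<B>'" if C: "\<forall>n. C n \<in> \<C>" for C
  proof (rule transfer)
    have \<tau>_C: "\<tau> (C n) n \<in> \<sigma> n \<inter> C n" for n
      using \<tau> C by blast
    then show "range (\<lambda>n. \<tau> (C n) n) \<subseteq> \<Union>\<A>" "range (\<lambda>n. \<tau> (C n) n) \<subseteq> \<Union>\<C>"
      using \<sigma> C by blast+
    show "range (\<lambda>n. \<tau> (C n) n) \<notin> \<B>"
      using \<tau>_C \<sigma>_wins[rule_format, of "\<lambda>n. \<tau> (C n) n"] by blast
  qed
  then show ?thesis
    unfolding bob_has_winning_markov_def using \<tau> by blast
qed

lemma alice_has_winning_predetermined_if_bob_has_winning_markov:
  fixes \<D> :: "'b set set"
  assumes "bob_has_winning_markov \<D> \<B>"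
    and selections: "selections_contain \<C> \<D>"
    and disjoint: "\<And>S. S \<in> \<B> \<Longrightarrow> S \<notin> \<B>'"
  shows "alice_has_winning_predetermined \<C> \<B>'"
proof -
  obtain \<tau> :: "'b set \<Rightarrow> nat \<Rightarrow> 'b" where \<tau>: "\<And>D n. D \<in> \<D> \<Longrightarrow> \<tau> D n \<in> D"
    and \<tau>_wins: "\<forall>D. (\<forall>n. D n \<in> \<D>) \<longrightarrow> range (\<lambda>n. \<tau> (D n) n) \<in> \<B>"
    using assms(1) by (auto simp: bob_has_winning_markov_def)
  define \<sigma> where "\<sigma> n = (SOME C. C \<in> \<C> \<and> C \<subseteq> (\<lambda>D. \<tau> D n) ` \<D>)" for n
  have \<sigma>: "\<sigma> n \<in> \<C> \<and> \<sigma> n \<subseteq> (\<lambda>D. \<tau> D n) ` \<D>" for n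
  proof -
    have "\<exists>C. C \<in> \<C> \<and> C \<subseteq> (\<lambda>D. \<tau> D n) ` \<D>"
      using selections_containD[OF selections \<tau>[where n = n]] by blast
    then show ?thesis
      unfolding \<sigma>_def by (rule someI_ex)
  qed
  have "range x \<notin> \<B>'" if x: "\<forall>n. x n \<in> \<sigma> n" for x
  proof -
    have "\<exists>D. D \<in> \<D> \<and> \<tau> D n = x n" for n
    proof -
      have "x n \<in> (\<lambda>D. \<tau> D n) ` \<D>"
        using \<sigma>[of n] x by blast
      then obtain D where "x n = \<tau> D n" "D \<in> \<D>"
        by (rule imageE)
      then show ?thesis
        by (intro exI[of _ D]) simp
    qed
    then have "\<exists>D. \<forall>n. D n \<in> \<D> \<and> \<tau> (D n) n = x n"
      by (intro choice allI)
    then obtain D where D: "\<forall>n. D n \<in> \<D> \<and> \<tau> (D n) n = x n"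
      by blast
    then have "range (\<lambda>n. \<tau> (D n) n) \<in> \<B>"
      using \<tau>_wins[rule_format, of D] by blast
    moreover have "range (\<lambda>n. \<tau> (D n) n) = range x"
      using D by simp
    ultimately show ?thesis
      using disjoint by simp
  qed
  then show ?thesis
    unfolding alice_has_winning_predetermined_def using \<sigma> by (intro exI[of _ \<sigma>]) blast
qed

lemma reflection_selection_range:
  assumes "reflection \<R> \<A>" and "\<And>R. R \<in> \<R> \<Longrightarrow> f R \<in> R"
  shows "f ` \<R> \<in> \<A>"
  using assms unfolding reflection_def by blast

lemma reflection_meets:
  assumes "reflection \<R> \<A>" and "A \<in> \<A>" and "R \<in> \<R>"
  shows "A \<inter> R \<noteq> {}"
  using assms unfolding reflection_def by blast

lemma reflection_selections_contain:
  assumes "reflection \<R> \<A>"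
  shows "selections_contain \<A> \<R>"
  unfolding selections_contain_def
proof (intro allI impI)
  fix g assume "\<forall>R\<in>\<R>. g R \<in> R"
  then have "g ` \<R> \<in> \<A>"
    by (intro reflection_selection_range[OF assms]) blast
  then show "\<exists>A\<in>\<A>. A \<subseteq> g ` \<R>"
    by blast
qed

lemma reflection_selections_contain_reflected:
  assumes "reflection \<R> \<A>"
  shows "selections_contain \<R> \<A>"
  unfolding selections_contain_def
proof (intro allI impI)
  fix g assume g: "\<forall>A\<in>\<A>. g A \<in> A"
  show "\<exists>R\<in>\<R>. R \<subseteq> g ` \<A>"
  proof (rule ccontr)
    assume "\<not> ?thesis"
    then have "\<forall>R\<in>\<R>. \<exists>v. v \<in> R - g ` \<A>"
      by blast
    then obtain f where f: "\<forall>R\<in>\<R>. f R \<in> R - g ` \<A>"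
      by (rule bchoice[THEN exE])
    then have f_range: "f ` \<R> \<in> \<A>"
      by (intro reflection_selection_range[OF assms]) blast
    then have "g (f ` \<R>) \<in> f ` \<R>"
      using g by (rule bspec[rotated])
    then obtain R where R: "g (f ` \<R>) = f R" "R \<in> \<R>"
      by (rule imageE)
    have "f R \<in> g ` \<A>"
      unfolding R(1)[symmetric] using f_range by (rule imageI)
    then show False
      using f R(2) by blast
  qed
qed

theorem reflection_games_dual:
  assumes "reflection \<R> \<A>"
  shows "(alice_has_winning \<A> \<B> \<longleftrightarrow> bob_has_winning \<R> (neg_game \<R> \<B>))
       \<and> (alice_has_winning \<R> (neg_game \<R> \<B>) \<longleftrightarrow> bob_has_winning \<A> \<B>)
       \<and> (alice_has_winning_predetermined \<A> \<B> \<longleftrightarrow> bob_has_winning_markov \<R> (neg_game \<R> \<B>))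
       \<and> (alice_has_winning_predetermined \<R> (neg_game \<R> \<B>) \<longleftrightarrow> bob_has_winning_markov \<A> \<B>)"
proof -
  have meets: "A \<inter> R \<noteq> {}" if "A \<in> \<A>" "R \<in> \<R>" for A R
    using reflection_meets[OF assms that] .
  have meets': "R \<inter> A \<noteq> {}" if "R \<in> \<R>" "A \<in> \<A>" for R A
    using meets that by blast
  have to_neg: "S \<in> neg_game \<R> \<B>" if "S \<subseteq> \<Union>\<A>" "S \<subseteq> \<Union>\<R>" "S \<notin> \<B>" for S
    using that by (auto simp: neg_game_def)
  have from_neg: "S \<in> \<B>" if "S \<subseteq> \<Union>\<R>" "S \<subseteq> \<Union>\<A>" "S \<notin> neg_game \<R> \<B>" for S
    using that by (auto simp: neg_game_def)
  have not_neg: "S \<notin> neg_game \<R> \<B>" if "S \<in> \<B>" for S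
    using that by (simp add: neg_game_def)
  have not_in: "S \<notin> \<B>" if "S \<in> neg_game \<R> \<B>" for S
    using that by (simp add: neg_game_def)
  note selections = reflection_selections_contain[OF assms]
  note selections' = reflection_selections_contain_reflected[OF assms]
  show ?thesis
  proof (intro conjI iffI)
    show "bob_has_winning \<R> (neg_game \<R> \<B>)" if "alice_has_winning \<A> \<B>"
      by (rule bob_has_winning_if_alice_has_winning[OF that meets to_neg])
    show "alice_has_winning \<A> \<B>" if "bob_has_winning \<R> (neg_game \<R> \<B>)"
      by (rule alice_has_winning_if_bob_has_winning[OF that selections not_in])
    show "bob_has_winning \<A> \<B>" if "alice_has_winning \<R> (neg_game \<R> \<B>)"
      by (rule bob_has_winning_if_alice_has_winning[OF that meets' from_neg])
    show "alice_has_winning \<R> (neg_game \<R> \<B>)" if "bob_has_winning \<A> \<B>"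
      by (rule alice_has_winning_if_bob_has_winning[OF that selections' not_neg])
    show "bob_has_winning_markov \<R> (neg_game \<R> \<B>)" if "alice_has_winning_predetermined \<A> \<B>"
      by (rule bob_has_winning_markov_if_alice_has_winning_predetermined[OF that meets to_neg])
    show "alice_has_winning_predetermined \<A> \<B>" if "bob_has_winning_markov \<R> (neg_game \<R> \<B>)"
      by (rule alice_has_winning_predetermined_if_bob_has_winning_markov[OF that selections not_in])
    show "bob_has_winning_markov \<A> \<B>" if "alice_has_winning_predetermined \<R> (neg_game \<R> \<B>)"
      by (rule bob_has_winning_markov_if_alice_has_winning_predetermined[OF that meets' from_neg])
    show "alice_has_winning_predetermined \<R> (neg_game \<R> \<B>)" if "bob_has_winning_markov \<A> \<B>"
      by (rule alice_has_winning_predetermined_if_bob_has_winning_markov[OF that selections' not_neg])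
  qed
qed

lemma clopen_in_subset_topspace: "clopen_in X U \<Longrightarrow> U \<subseteq> topspace X"
  by (simp add: clopen_in_def openin_subset)

lemma mem_clopen_nbhd_systems:
  "N \<in> clopen_nbhd_systems X \<longleftrightarrow> (\<exists>x\<in>topspace X. N = clopen_nbhds X x)"
  by (auto simp: clopen_nbhd_systems_def)

lemma clopen_nbhd_systems_reflection: "reflection (clopen_nbhd_systems X) (clopen_covers X)"
  unfolding reflection_def
proof (intro conjI allI impI ballI)
  fix f assume f: "\<forall>N\<in>clopen_nbhd_systems X. f N \<in> N"
  have f_nbhd: "f (clopen_nbhds X x) \<in> clopen_nbhds X x" if "x \<in> topspace X" for x
    using f that mem_clopen_nbhd_systems by blast
  have "clopen_in X (f N)" if "N \<in> clopen_nbhd_systems X" for N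
    using that f_nbhd unfolding mem_clopen_nbhd_systems clopen_nbhds_def by blast
  moreover have "topspace X \<subseteq> \<Union>(f ` clopen_nbhd_systems X)"
  proof
    fix x assume "x \<in> topspace X"
    then show "x \<in> \<Union>(f ` clopen_nbhd_systems X)"
      using f_nbhd mem_clopen_nbhd_systems unfolding clopen_nbhds_def by blast
  qed
  ultimately show "f ` clopen_nbhd_systems X \<in> clopen_covers X"
    using clopen_in_subset_topspace unfolding clopen_covers_def by blast
next
  fix \<U> N assume \<U>: "\<U> \<in> clopen_covers X" and "N \<in> clopen_nbhd_systems X"
  then obtain x where x: "x \<in> topspace X" and N: "N = clopen_nbhds X x"
    by (auto simp: mem_clopen_nbhd_systems)
  then obtain U where "U \<in> \<U>" "x \<in> U"
    using \<U> by (auto simp: clopen_covers_def)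
  then show "\<U> \<inter> N \<noteq> {}"
    using \<U> by (auto simp: N clopen_covers_def clopen_nbhds_def)
qed

theorem corollary3p6:
  fixes X :: "'a topology"
  shows "(alice_has_winning (clopen_covers X) (clopen_covers X) \<longleftrightarrow>
            bob_has_winning (clopen_nbhd_systems X) (neg_game (clopen_nbhd_systems X) (clopen_covers X)))
       \<and> (alice_has_winning (clopen_nbhd_systems X) (neg_game (clopen_nbhd_systems X) (clopen_covers X)) \<longleftrightarrow>
            bob_has_winning (clopen_covers X) (clopen_covers X))
       \<and> (alice_has_winning_predetermined (clopen_covers X) (clopen_covers X) \<longleftrightarrow>
            bob_has_winning_markov (clopen_nbhd_systems X) (neg_game (clopen_nbhd_systems X) (clopen_covers X)))
       \<and> (alice_has_winning_predetermined (clopen_nbhd_systems X) (neg_game (clopen_nbhd_systems X) (clopen_covers X)) \<longleftrightarrow>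
            bob_has_winning_markov (clopen_covers X) (clopen_covers X))"
  by (rule reflection_games_dual[OF clopen_nbhd_systems_reflection])

end
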